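(* Let $G=\operatorname{Gp}\langle X\mid R\rangle$ and let $\Re$ be a complete rewriting system for $G$ on $X\cup X^{-1}$ satisfying the condition $C^{+}$. Then for all positive words $u,v\in X^{*}$: $u\equiv_{\Re}v$ if and only if $u\equiv_{\Re^{+}}v$.
   Context: A rewriting system on an alphabet $\Sigma$ is a set of rules $l\rightarrow r$ in $\Sigma^{*}\times\Sigma^{*}$; $ulv$ reduces to $urv$. Complete means terminating (no infinite reduction chains) and confluent (words with a common ancestor have a common descendant). $\equiv_{\Re}$ is the congruence generated by $\Re$. A rewriting system for $G$ is one on $X\cup X^{-1}$ whose congruence equals the congruence generated by $R\cup\{xx^{-1}=1,x^{-1}x=1:x\in X\}$. A word is positive if it lies in $X^{*}$ (the empty word counts as positive). $\Re^{+}$ is the set of rules of $\Re$ with positive left-hand side. $\Re$ satisfies $C^{+}$ if $\Re^{+}\neq\emptyset$ and every rule of $\Re$ with positive left-hand side has positive right-hand side. *)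

theory Defs
  imports Main
begin

text \<open>Letters of the alphabet X \<union> X^-1: Pos x stands for x, Neg x for x^-1.\<close>
datatype 'a letter = Pos 'a | Neg 'a

type_synonym 'a word = "'a letter list"
type_synonym 'a rules = "('a word \<times> 'a word) set"

definition alph :: "'a set \<Rightarrow> 'a letter set" where
  "alph X = Pos ` X \<union> Neg ` X"

definition rewriting_system_on :: "'a set \<Rightarrow> 'a rules \<Rightarrow> bool" where
  "rewriting_system_on X Re \<longleftrightarrow> (\<forall>(l, r) \<in> Re. l \<in> lists (alph X) \<and> r \<in> lists (alph X))"

definition rstep :: "'a rules \<Rightarrow> ('a word \<times> 'a word) set" where
  "rstep Re = {(u @ l @ v, u @ r @ v) | u l r v. (l, r) \<in> Re}"

definition cong_gen :: "'a rules \<Rightarrow> ('a word \<times> 'a word) set" where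
  "cong_gen Re = (rstep Re \<union> (rstep Re)\<inverse>)\<^sup>*"

definition terminating :: "'a rules \<Rightarrow> bool" where
  "terminating Re \<longleftrightarrow> \<not> (\<exists>f :: nat \<Rightarrow> 'a word. \<forall>i. (f i, f (Suc i)) \<in> rstep Re)"

definition confluent :: "'a rules \<Rightarrow> bool" where
  "confluent Re \<longleftrightarrow> (\<forall>w x y. (w, x) \<in> (rstep Re)\<^sup>* \<and> (w, y) \<in> (rstep Re)\<^sup>*
      \<longrightarrow> (\<exists>z. (x, z) \<in> (rstep Re)\<^sup>* \<and> (y, z) \<in> (rstep Re)\<^sup>*))"

definition complete :: "'a rules \<Rightarrow> bool" where
  "complete Re \<longleftrightarrow> terminating Re \<and> confluent Re"

definition free_rels :: "'a set \<Rightarrow> 'a rules" where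
  "free_rels X = {([Pos x, Neg x], []) | x. x \<in> X} \<union> {([Neg x, Pos x], []) | x. x \<in> X}"

definition rewriting_system_for :: "'a set \<Rightarrow> 'a rules \<Rightarrow> 'a rules \<Rightarrow> bool" where
  "rewriting_system_for X R Re \<longleftrightarrow>
     rewriting_system_on X Re \<and> cong_gen Re = cong_gen (R \<union> free_rels X)"

definition positive :: "'a set \<Rightarrow> 'a word \<Rightarrow> bool" where
  "positive X w \<longleftrightarrow> w \<in> lists (Pos ` X)"

definition pos_rules :: "'a set \<Rightarrow> 'a rules \<Rightarrow> 'a rules" where
  "pos_rules X Re = {(l, r) \<in> Re. positive X l}"

definition cond_Cplus :: "'a set \<Rightarrow> 'a rules \<Rightarrow> bool" where
  "cond_Cplus X Re \<longleftrightarrow> pos_rules X Re \<noteq> {} \<and> (\<forall>(l, r) \<in> Re. positive X l \<longrightarrow> positive X r)"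

end

theory Submission
  imports Defs
begin

(* Let u, v be positive words with u \<equiv>\<^sub>\<Re> v.  Because \<Re> terminates,
   u and v reduce to irreducible words a and b.  Condition C+ makes positivity an
   invariant of reduction: a rule applied inside a positive word has a positive
   left-hand side, hence lies in \<Re>+ and has a positive right-hand side.  So both
   reductions u \<rightarrow>* a and v \<rightarrow>* b use only rules of \<Re>+.  Since \<Re> is confluent,
   it is Church-Rosser, so the convertible irreducible words a and b coincide.
   Hence u and v have a common descendant via \<Re>+, giving u \<equiv>\<^sub>\<Re>\<^sub>+ v.  The converse
   holds because \<Re>+ \<subseteq> \<Re>. *)

definition irreducible :: "'a rules \<Rightarrow> 'a word \<Rightarrow> bool" where
  "irreducible Re w \<longleftrightarrow> (\<forall>y. (w, y) \<notin> rstep Re)"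

lemma cong_gen_mono: "A \<subseteq> B \<Longrightarrow> cong_gen A \<subseteq> cong_gen B"
proof -
  assume "A \<subseteq> B"
  then have "rstep A \<subseteq> rstep B" unfolding rstep_def by blast
  then show ?thesis unfolding cong_gen_def by (intro rtrancl_mono) blast
qed

lemma cong_gen_sym: "(u, v) \<in> cong_gen Re \<Longrightarrow> (v, u) \<in> cong_gen Re"
proof -
  have sym: "(rstep Re \<union> (rstep Re)\<inverse>)\<inverse> = rstep Re \<union> (rstep Re)\<inverse>" by auto
  assume "(u, v) \<in> cong_gen Re"
  then show ?thesis unfolding cong_gen_def by (metis rtrancl_converseI sym converse_iff)
qed

lemma reduction_imp_cong: "(u, v) \<in> (rstep Re)\<^sup>* \<Longrightarrow> (u, v) \<in> cong_gen Re"
  unfolding cong_gen_def by (meson rtrancl_mono[THEN subsetD] Un_upper1)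

lemma joinable_imp_cong:
  assumes "(u, z) \<in> (rstep Re)\<^sup>*" and "(v, z) \<in> (rstep Re)\<^sup>*"
  shows "(u, v) \<in> cong_gen Re"
  using reduction_imp_cong[OF assms(1)] cong_gen_sym[OF reduction_imp_cong[OF assms(2)]]
  unfolding cong_gen_def by (rule rtrancl_trans)

lemma confluent_church_rosser:
  assumes c: "confluent Re" and "(u, v) \<in> cong_gen Re"
  shows "\<exists>z. (u, z) \<in> (rstep Re)\<^sup>* \<and> (v, z) \<in> (rstep Re)\<^sup>*"
  using assms(2) unfolding cong_gen_def
proof (induction rule: rtrancl_induct)
  case base then show ?case by blast
next
  case (step w w')
  then obtain a where a: "(u, a) \<in> (rstep Re)\<^sup>*" "(w, a) \<in> (rstep Re)\<^sup>*" by blast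
  show ?case
  proof (cases "(w, w') \<in> rstep Re")
    case True
    then have "(w, w') \<in> (rstep Re)\<^sup>*" by blast
    with a c obtain b where "(a, b) \<in> (rstep Re)\<^sup>*" "(w', b) \<in> (rstep Re)\<^sup>*"
      unfolding confluent_def by blast
    with a show ?thesis by (meson rtrancl_trans)
  next
    case False
    with step have "(w', w) \<in> rstep Re" by blast
    with a show ?thesis by (meson converse_rtrancl_into_rtrancl)
  qed
qed

lemma confluent_irreducible_unique:
  assumes "confluent Re" and "(a, b) \<in> cong_gen Re"
    and "irreducible Re a" and "irreducible Re b"
  shows "a = b"
proof -
  obtain z where "(a, z) \<in> (rstep Re)\<^sup>*" "(b, z) \<in> (rstep Re)\<^sup>*"
    using confluent_church_rosser[OF assms(1,2)] by blast
  with assms(3,4) have "a = z" "b = z"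
    unfolding irreducible_def by (auto elim: converse_rtranclE)
  then show ?thesis by simp
qed

lemma terminating_normal_form:
  assumes "terminating Re"
  shows "\<exists>z. (w, z) \<in> (rstep Re)\<^sup>* \<and> irreducible Re z"
proof -
  have "wf ((rstep Re)\<inverse>)"
    using assms unfolding terminating_def wf_iff_no_infinite_down_chain by simp
  then show ?thesis
  proof (induction w rule: wf_induct_rule)
    case (less w)
    show ?case
    proof (cases "irreducible Re w")
      case False
      then obtain y where y: "(w, y) \<in> rstep Re" unfolding irreducible_def by blast
      with less obtain z where "(y, z) \<in> (rstep Re)\<^sup>*" "irreducible Re z" by blast
      with y show ?thesis by (meson converse_rtrancl_into_rtrancl)
    qed blast
  qed
qed

lemma positive_append [simp]: "positive X (p @ q) \<longleftrightarrow> positive X p \<and> positive X q"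
  unfolding positive_def by auto

lemma Cplus_step_positive:
  assumes "cond_Cplus X Re" "positive X w" "(w, w') \<in> rstep Re"
  shows "(w, w') \<in> rstep (pos_rules X Re) \<and> positive X w'"
proof -
  from assms(3) obtain p l r q where w: "w = p @ l @ q" "w' = p @ r @ q" "(l, r) \<in> Re"
    unfolding rstep_def by blast
  with assms(2) have pos: "positive X p" "positive X l" "positive X q" by auto
  with assms(1) w have "positive X r" unfolding cond_Cplus_def by blast
  have "(l, r) \<in> pos_rules X Re" using w pos unfolding pos_rules_def by blast
  then have "(w, w') \<in> rstep (pos_rules X Re)" using w unfolding rstep_def by blast
  with w pos \<open>positive X r\<close> show ?thesis by simp
qed

lemma Cplus_reduction_positive:
  assumes "cond_Cplus X Re" "positive X w" "(w, w') \<in> (rstep Re)\<^sup>*"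
  shows "(w, w') \<in> (rstep (pos_rules X Re))\<^sup>* \<and> positive X w'"
  using assms(3)
proof (induction rule: rtrancl_induct)
  case base then show ?case using assms(2) by simp
next
  case (step y z)
  then show ?case using Cplus_step_positive[OF assms(1)] by (meson rtrancl.rtrancl_into_rtrancl)
qed

theorem lemma3p7:
  fixes X :: "'a set" and R Re :: "'a rules"
  assumes "\<forall>(l, r) \<in> R. l \<in> lists (alph X) \<and> r \<in> lists (alph X)"
    and "rewriting_system_for X R Re"
    and "complete Re"
    and "cond_Cplus X Re"
    and "positive X u" and "positive X v"
  shows "(u, v) \<in> cong_gen Re \<longleftrightarrow> (u, v) \<in> cong_gen (pos_rules X Re)"
proof
  assume "(u, v) \<in> cong_gen (pos_rules X Re)"
  moreover have "pos_rules X Re \<subseteq> Re" unfolding pos_rules_def by blast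
  ultimately show "(u, v) \<in> cong_gen Re" using cong_gen_mono by blast
next
  assume uv: "(u, v) \<in> cong_gen Re"
  have t: "terminating Re" and c: "confluent Re" using assms(3) unfolding complete_def by auto
  obtain a where ua: "(u, a) \<in> (rstep Re)\<^sup>*" and a: "irreducible Re a"
    using terminating_normal_form[OF t] by blast
  obtain b where vb: "(v, b) \<in> (rstep Re)\<^sup>*" and b: "irreducible Re b"
    using terminating_normal_form[OF t] by blast
  have "(a, u) \<in> cong_gen Re" "(v, b) \<in> cong_gen Re"
    using cong_gen_sym reduction_imp_cong ua vb by blast+
  then have "(a, b) \<in> cong_gen Re"
    using uv unfolding cong_gen_def by (meson rtrancl_trans)
  with c a b have "a = b" using confluent_irreducible_unique by blast
  with ua vb show "(u, v) \<in> cong_gen (pos_rules X Re)"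
    using Cplus_reduction_positive[OF assms(4)] assms(5,6) joinable_imp_cong by metis
qed

end
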